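(* Let $K>0$, $S=1/K$, and let $\theta:[S,\infty)\to[0,\infty)$ satisfy $\theta(s)>0$ for every $s>S$. Let $\Delta t,\Delta N>0$ and consider the update $$X(t+\Delta t,N)=X(t,N)+\Delta t\,\theta\big(D(t,N)\big),$$ where the spacing estimate $D(t,N)$ (approximating $-X_N$) is one of the following non-anisotropic discretizations: (a) forward difference $D(t,N)=\frac{X(t,N)-X(t,N+\Delta N)}{\Delta N}$; (b) arithmetic central difference $D(t,N)=\frac{X(t,N-\Delta N)-X(t,N+\Delta N)}{2\Delta N}$; (c) harmonic central difference $D(t,N)=\dfrac{2}{\frac{\Delta N}{X(t,N)-X(t,N+\Delta N)}+\frac{\Delta N}{X(t,N-\Delta N)-X(t,N)}}$. Then in each case the model is not collision-free: there exist positions at time $t$ with $X(t,N-\Delta N)-X(t,N)=S\Delta N$ and $X(t,N)-X(t,N+\Delta N)>S\Delta N$, with the leader stopped ($X(t+\Delta t,N-\Delta N)=X(t,N-\Delta N)$), such that $X(t+\Delta t,N-\Delta N)-X(t+\Delta t,N)<S\Delta N$.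
   Context: $X(t,N)$ is the location at time $t$ of vehicle $N$; vehicle $N-\Delta N$ is the leader and vehicle $N+\Delta N$ the follower of vehicle $N$. $\theta$ is the speed-spacing relation, $K$ the jam density and $S$ the jam spacing. A model is collision-free if spacings $X(t,N-\Delta N)-X(t,N)$ never fall below $S\Delta N$. *)

theory Defs
  imports Complex_Main
begin

text \<open>Trajectories: X t N is the position at time t of vehicle N.
  Vehicle N - dN is the leader, N + dN the follower.\<close>

datatype scheme = Forward | ArithCentral | HarmCentral

definition spacing_est :: "scheme \<Rightarrow> (real \<Rightarrow> real \<Rightarrow> real) \<Rightarrow> real \<Rightarrow> real \<Rightarrow> real \<Rightarrow> real" where
  "spacing_est sc X t N dN =
     (case sc of
        Forward \<Rightarrow> (X t N - X t (N + dN)) / dN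
      | ArithCentral \<Rightarrow> (X t (N - dN) - X t (N + dN)) / (2 * dN)
      | HarmCentral \<Rightarrow> 2 / (dN / (X t N - X t (N + dN)) + dN / (X t (N - dN) - X t N)))"

end

theory Submission
  imports Defs
begin

text \<open>A vehicle sitting exactly at jam spacing behind a stopped leader, but with a follower
  further than jam spacing behind it, sees a spacing estimate above S in each of the three
  schemes, since each of them weighs in the follower-side gap. Hence
  \<open>\<theta>\<close> gives it a positive speed, it moves forward while the leader stays put,
  and their spacing drops below S\<Delta>N.\<close>

lemma spacing_est_cong_time:
  assumes "X t = Y t"
  shows "spacing_est sc X t N dN = spacing_est sc Y t N dN"
  unfolding spacing_est_def assms ..

lemma spacing_est_gt_jam:
  fixes S dN :: real
  assumes "S > 0" and "dN > 0"
    and leader_gap: "X t (N - dN) - X t N = S * dN"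
    and follower_gap: "X t N - X t (N + dN) > S * dN"
  shows "spacing_est sc X t N dN > S"
proof (cases sc)
  case Forward
  then show ?thesis
    using assms by (simp add: spacing_est_def pos_less_divide_eq mult.commute)
next
  case ArithCentral
  have "X t (N - dN) - X t (N + dN) > S * (2 * dN)"
    using leader_gap follower_gap by linarith
  then show ?thesis
    using ArithCentral \<open>dN > 0\<close> by (simp add: spacing_est_def pos_less_divide_eq)
next
  case HarmCentral
  define g where "g = X t N - X t (N + dN)"
  have "g > 0"
    using follower_gap mult_pos_pos[OF \<open>S > 0\<close> \<open>dN > 0\<close>] g_def by linarith
  have "dN / g < 1 / S"
    using follower_gap \<open>S > 0\<close> \<open>g > 0\<close> by (simp add: g_def divide_simps mult.commute)
  then have "dN / g + 1 / S < 2 / S"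
    by simp
  moreover have "dN / g + 1 / S > 0"
    using \<open>g > 0\<close> \<open>S > 0\<close> \<open>dN > 0\<close> by (simp add: add_pos_pos)
  ultimately have "2 / (dN / g + 1 / S) > 2 / (2 / S)"
    using \<open>S > 0\<close> by (intro divide_strict_left_mono) (auto intro: mult_pos_pos)
  moreover have "dN / (X t (N - dN) - X t N) = 1 / S"
    using leader_gap \<open>dN > 0\<close> by simp
  ultimately show ?thesis
    using HarmCentral by (simp add: spacing_est_def g_def)
qed

theorem theorem4p4:
  fixes K S dt dN t N :: real and \<theta> :: "real \<Rightarrow> real" and sc :: scheme
  assumes "K > 0" and "S = 1 / K"
    and "\<forall>s\<ge>S. \<theta> s \<ge> 0"
    and "\<forall>s>S. \<theta> s > 0"
    and "dt > 0" and "dN > 0"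
  shows "\<exists>X :: real \<Rightarrow> real \<Rightarrow> real.
           X (t + dt) N = X t N + dt * \<theta> (spacing_est sc X t N dN)
         \<and> X t (N - dN) - X t N = S * dN
         \<and> X t N - X t (N + dN) > S * dN
         \<and> X (t + dt) (N - dN) = X t (N - dN)
         \<and> X (t + dt) (N - dN) - X (t + dt) N < S * dN"
proof -
  have "S > 0" using assms(1,2) by simp
  have distinct: "N - dN \<noteq> N" "N + dN \<noteq> N" "N + dN \<noteq> N - dN" "t + dt \<noteq> t"
    using assms(5,6) by auto
  define p where "p n = (if n = N then - S * dN else if n = N + dN then - 3 * S * dN else 0)"
    for n :: real
  \<comment> \<open>The estimate only reads positions at time t, so it can be fixed before X is.\<close>
  define e where "e = spacing_est sc (\<lambda>_. p) t N dN"
  define X where "X \<tau> n = (if \<tau> = t + dt \<and> n = N then p N + dt * \<theta> e else p n)"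
    for \<tau> n :: real
  have "X t = p"
    using distinct by (auto simp: X_def)
  then have est: "spacing_est sc X t N dN = e"
    unfolding e_def by (rule spacing_est_cong_time)
  have "e > S"
    unfolding e_def
    using \<open>S > 0\<close> assms(6) distinct by (intro spacing_est_gt_jam) (auto simp: p_def)
  then have "dt * \<theta> e > 0"
    using assms(4,5) by simp
  then show ?thesis
    using distinct \<open>S > 0\<close> assms(6)
    by (intro exI[of _ X]) (auto simp: X_def p_def est)
qed

end
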